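(* Let $e,n\geq 1$. A basis of $H^\bullet(\Gamma(e,e,n);\mathbb{Q})$ is naturally indexed by the orbits, under the action of $W=G(e,e,n)$, of the set of invariant $e$-multigraphs on $n$ vertices: for each such orbit with representative $\Delta$, the class $\sum_{w\in W}w(\omega_\Delta)$ is nonzero, and these classes form a basis, the class of $\Delta$ having degree equal to the number of edges of $\Delta$.
   Context: For a finite complex reflection group $W$ with hyperplane set $\mathcal A$, $P=\pi_1(\mathbb{C}^\ell\setminus\bigcup\mathcal A)$, $B=\pi_1((\mathbb{C}^\ell\setminus\bigcup\mathcal A)/W)$, $\Gamma=B/[P,P]$; then $H^\bullet(\Gamma;\mathbb{Q})\cong\Lambda^\bullet(\mathbb{Q}\mathcal A)^W$, where $H^1$ of $P^{ab}\cong\mathbb{Z}\mathcal A$ has basis the forms $d\log$ of the hyperplanes' linear forms and $W$ acts by permuting them. $G(e,e,n)$ is the group of $n\times n$ monomial matrices with nonzero entries in $\mu_e$ (the $e$-th roots of unity) whose product is $1$; $\Gamma(e,e,n)$ is $\Gamma$ for this group; its hyperplanes are $z_i=\zeta z_j$, $i<j$, $\zeta\in\mu_e$. $K_n(e)$ is the complete $e$-multigraph on $\{1,\dots,n\}$ with $e$ edges between each pair $i<j$, labelled by $\zeta\in\mu_e$; an $e$-multigraph on $n$ vertices is a subgraph (subset of edges) of $K_n(e)$. The edge $(i,j,\zeta)$ corresponds to the 1-form $\omega^{\zeta}_{i,j}=d\log(z_i-\zeta z_j)$, and a multigraph $\Delta$ to the wedge product $\omega_\Delta$ of its edges' forms ordered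 lexicographically in $(i,j,\zeta)$ (for a fixed order of $\mu_e$). $W$ acts on multigraphs through its action on hyperplanes. $\mathrm{Stab}_W(\Delta)$ is the subgroup of $W$ preserving $\Delta$; $\Delta$ is invariant if every element of $\mathrm{Stab}_W(\Delta)$ induces an even permutation of the edges of $\Delta$. *)

theory Defs
  imports Complex_Main "HOL-Library.Product_Lexorder" "HOL-Combinatorics.Permutations"
begin

text \<open>
  Vertices are 0,...,n-1.  A root of unity zeta = exp(2 pi i k / e) is encoded by its
  exponent k < e; mu_e is ordered by this exponent.  The edge (i,j,k) with i < j < n, k < e
  stands for the hyperplane z_i = zeta^k z_j, i.e. the 1-form d log(z_i - zeta^k z_j).
  Edges (type nat * nat * nat) are ordered lexicographically (Product_Lexorder).
\<close>

type_synonym edge = "nat \<times> nat \<times> nat"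

definition hyp :: "nat \<Rightarrow> nat \<Rightarrow> edge set" where
  "hyp e n = {(i, j, k). i < j \<and> j < n \<and> k < e}"

text \<open>The group G(e,e,n): a pair (sigma, c) stands for the monomial matrix w with
  w e_i = zeta^(c i) e_(sigma i); the condition on the sum of the c i is that
  the product of the nonzero entries is 1.\<close>
definition Geen :: "nat \<Rightarrow> nat \<Rightarrow> ((nat \<Rightarrow> nat) \<times> (nat \<Rightarrow> nat)) set" where
  "Geen e n = {(\<sigma>, c). \<sigma> permutes {..<n} \<and> (\<forall>i. n \<le> i \<longrightarrow> c i = 0)
                 \<and> (\<forall>i<n. c i < e) \<and> (\<Sum>i<n. c i) mod e = 0}"

text \<open>Action of w on hyperplanes: w maps the hyperplane z_i = zeta^k z_j to
  y_(sigma i) = zeta^(k + c i - c j) y_(sigma j).\<close>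
fun edge_map :: "nat \<Rightarrow> (nat \<Rightarrow> nat) \<times> (nat \<Rightarrow> nat) \<Rightarrow> edge \<Rightarrow> edge" where
  "edge_map e (\<sigma>, c) (i, j, k) =
     (let m = (k + c i + (e - c j)) mod e in
      if \<sigma> i < \<sigma> j then (\<sigma> i, \<sigma> j, m) else (\<sigma> j, \<sigma> i, (e - m) mod e))"

text \<open>Sign with which w sends omega_S to +- omega_(w S): (-1)^(number of inversions of
  the sequence w(a_1),...,w(a_k), where a_1 < ... < a_k are the edges of S).  For w in the
  stabiliser of S this is the sign of the permutation of the edges of S induced by w.\<close>
definition act_sign :: "nat \<Rightarrow> (nat \<Rightarrow> nat) \<times> (nat \<Rightarrow> nat) \<Rightarrow> edge set \<Rightarrow> rat" where
  "act_sign e w S = (-1) ^ card {(a, b). a \<in> S \<and> b \<in> S \<and> a < b \<and> edge_map e w b < edge_map e w a}"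

text \<open>The exterior algebra Lambda(Q A): an element is its coefficient function on the
  basis omega_S, S a subset of A (coefficient 0 outside Pow A).\<close>
definition ext_alg :: "nat \<Rightarrow> nat \<Rightarrow> (edge set \<Rightarrow> rat) set" where
  "ext_alg e n = {x. \<forall>S. S \<notin> Pow (hyp e n) \<longrightarrow> x S = 0}"

definition ext_act :: "nat \<Rightarrow> nat \<Rightarrow> (nat \<Rightarrow> nat) \<times> (nat \<Rightarrow> nat) \<Rightarrow> (edge set \<Rightarrow> rat) \<Rightarrow> (edge set \<Rightarrow> rat)" where
  "ext_act e n w x = (\<lambda>T. \<Sum>S\<in>Pow (hyp e n). if edge_map e w ` S = T then act_sign e w S * x S else 0)"

definition ext_inv :: "nat \<Rightarrow> nat \<Rightarrow> (edge set \<Rightarrow> rat) set" where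
  "ext_inv e n = {x \<in> ext_alg e n. \<forall>w\<in>Geen e n. ext_act e n w x = x}"

definition omega :: "edge set \<Rightarrow> (edge set \<Rightarrow> rat)" where
  "omega D = (\<lambda>T. if T = D then 1 else 0)"

definition orbit_class :: "nat \<Rightarrow> nat \<Rightarrow> edge set \<Rightarrow> (edge set \<Rightarrow> rat)" where
  "orbit_class e n D = (\<lambda>T. \<Sum>w\<in>Geen e n. ext_act e n w (omega D) T)"

definition invariant_mg :: "nat \<Rightarrow> nat \<Rightarrow> edge set \<Rightarrow> bool" where
  "invariant_mg e n D \<longleftrightarrow> D \<subseteq> hyp e n \<and>
     (\<forall>w\<in>Geen e n. edge_map e w ` D = D \<longrightarrow> act_sign e w D = 1)"

definition mg_orbit :: "nat \<Rightarrow> nat \<Rightarrow> edge set \<Rightarrow> edge set set" where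
  "mg_orbit e n D = (\<lambda>w. edge_map e w ` D) ` Geen e n"

definition inv_orbits :: "nat \<Rightarrow> nat \<Rightarrow> edge set set set" where
  "inv_orbits e n = {mg_orbit e n D | D. invariant_mg e n D}"

definition homogeneous :: "nat \<Rightarrow> (edge set \<Rightarrow> rat) \<Rightarrow> bool" where
  "homogeneous d x \<longleftrightarrow> (\<forall>T. x T \<noteq> 0 \<longrightarrow> card T = d)"

definition is_basis_family :: "(edge set \<Rightarrow> rat) set \<Rightarrow> 'i set \<Rightarrow> ('i \<Rightarrow> edge set \<Rightarrow> rat) \<Rightarrow> bool" where
  "is_basis_family V I b \<longleftrightarrow> finite I \<and> (\<forall>i\<in>I. b i \<in> V) \<and>
     (\<forall>x\<in>V. \<exists>!a. (\<forall>i. i \<notin> I \<longrightarrow> a i = 0) \<and> x = (\<lambda>T. \<Sum>i\<in>I. a i * b i T))"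

end

theory Submission
  imports Defs
begin

text \<open>
  An invariant element x of the exterior algebra satisfies x (w S) = \<epsilon>(w, S) x S, where
  \<epsilon>(w, S) = \<plusminus>1 is the sign with which w permutes the edges of S. Hence x vanishes at every S
  that some element of its stabiliser permutes oddly, and on each orbit x is determined by its
  value at a single point. For an invariant \<Delta> the orbit sum of \<omega>_\<Delta> is an invariant supported
  on the orbit of \<Delta>, whose value at \<Delta> is the order of the stabiliser of \<Delta>; so these orbit
  sums have disjoint supports and span the invariants. Everything rests on the cocycle identity
  \<epsilon>(v w, S) = \<epsilon>(w, S) \<epsilon>(v, w S), which is a count of inversions of a composite of injective
  maps between linearly ordered sets.
\<close>

type_synonym geen_elem = "(nat \<Rightarrow> nat) \<times> (nat \<Rightarrow> nat)"

section \<open>Arithmetic of exponents modulo e\<close>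

lemma nat_mod_eq_iff_int_mod_eq:
  "(x::nat) mod e = y mod e \<longleftrightarrow> int x mod int e = int y mod int e"
  by (metis of_nat_eq_iff zmod_int)

text \<open>For b \<le> e, (m + a + (e - b)) mod e is the residue of m + a - b; this is how edge_map
  updates exponents. In each identity below both sides are congruent modulo e; in the integers,
  writing every remainder x mod e as x - (x div e) * e turns the congruence into divisibility
  of a polynomial by e.\<close>

lemma exponent_shift_compose:
  fixes m a b a' b' e :: nat
  assumes "b \<le> e" "b' \<le> e" "0 < e"
  shows "((m + a + (e - b)) mod e + a' + (e - b')) mod e
       = (m + (a + a') mod e + (e - (b + b') mod e)) mod e"
  using assms
  apply (simp only: nat_mod_eq_iff_int_mod_eq zmod_int of_nat_add of_nat_diff mod_le_divisor)
  apply (simp only: mod_eq_dvd_iff)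
  apply (simp only: flip: minus_div_mult_eq_mod)
  by (simp add: algebra_simps)

lemma exponent_shift_negate:
  fixes m a b e :: nat
  assumes "m \<le> e" "a \<le> e" "b \<le> e" "0 < e"
  shows "((e - m) mod e + b + (e - a)) mod e = (e - (m + a + (e - b)) mod e) mod e"
  using assms
  apply (simp only: nat_mod_eq_iff_int_mod_eq zmod_int of_nat_add of_nat_diff mod_le_divisor)
  apply (simp only: mod_eq_dvd_iff)
  apply (simp only: flip: minus_div_mult_eq_mod)
  by (simp add: algebra_simps)

lemma exponent_negate_negate:
  fixes m e :: nat
  assumes "m < e"
  shows "(e - (e - m) mod e) mod e = m"
proof -
  have "(e - (e - m) mod e) mod e = m mod e"
    using assms
    apply (simp only: nat_mod_eq_iff_int_mod_eq zmod_int of_nat_diff mod_le_divisor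
        less_imp_le diff_le_self)
    apply (simp only: mod_eq_dvd_iff)
    apply (simp only: flip: minus_div_mult_eq_mod)
    by (simp add: algebra_simps)
  then show ?thesis
    using assms by simp
qed

lemma mod_add_left_cancel_less:
  fixes a b x e :: nat
  assumes "a < e" "b < e" "(x + a) mod e = (x + b) mod e"
  shows "a = b"
proof -
  have "a mod e = b mod e"
    using assms(3) by (simp add: nat_mod_eq_iff_int_mod_eq mod_eq_dvd_iff)
  then show ?thesis
    using assms(1,2) by simp
qed

section \<open>The group G(e,e,n)\<close>

text \<open>The product of monomial matrices: (\<tau>, d) (\<sigma>, c) sends the basis vector e_i to
  \<zeta>^(c i + d (\<sigma> i)) e_(\<tau> (\<sigma> i)).\<close>
definition geen_mult :: "nat \<Rightarrow> nat \<Rightarrow> geen_elem \<Rightarrow> geen_elem \<Rightarrow> geen_elem" where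
  "geen_mult e n v w =
     (fst v \<circ> fst w, \<lambda>i. if i < n then (snd w i + snd v (fst w i)) mod e else 0)"

definition geen_one :: geen_elem where
  "geen_one = (id, \<lambda>_. 0)"

lemma Geen_memD:
  assumes "(\<sigma>, c) \<in> Geen e n"
  shows "\<sigma> permutes {..<n}" "\<And>i. n \<le> i \<Longrightarrow> c i = 0" "\<And>i. i < n \<Longrightarrow> c i < e"
    "(\<Sum>i<n. c i) mod e = 0"
  using assms unfolding Geen_def by auto

lemma geen_one_in_Geen: "0 < e \<Longrightarrow> geen_one \<in> Geen e n"
  unfolding geen_one_def Geen_def by (auto simp: permutes_id)

lemma geen_mult_in_Geen:
  assumes v: "v \<in> Geen e n" and w: "w \<in> Geen e n" and e: "0 < e"
  shows "geen_mult e n v w \<in> Geen e n"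
proof -
  obtain \<tau> d where v_eq: "v = (\<tau>, d)" by (cases v)
  obtain \<sigma> c where w_eq: "w = (\<sigma>, c)" by (cases w)
  note \<sigma> = Geen_memD[OF w[unfolded w_eq]] and \<tau> = Geen_memD[OF v[unfolded v_eq]]
  have "(\<Sum>i<n. (c i + d (\<sigma> i)) mod e) mod e = ((\<Sum>i<n. c i) + (\<Sum>i<n. d (\<sigma> i))) mod e"
    by (simp add: mod_sum_eq sum.distrib)
  also have "(\<Sum>i<n. d (\<sigma> i)) = (\<Sum>i<n. d i)"
    using sum.permute[OF \<sigma>(1), of d] by simp
  also have "((\<Sum>i<n. c i) + (\<Sum>i<n. d i)) mod e = 0"
    using \<sigma>(4) \<tau>(4) by (metis mod_add_eq add_0 mod_0)
  finally have "(\<Sum>i<n. (c i + d (\<sigma> i)) mod e) mod e = 0" .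
  then show ?thesis
    unfolding v_eq w_eq geen_mult_def Geen_def using e permutes_compose[OF \<sigma>(1) \<tau>(1)] by auto
qed

lemma finite_Geen: "finite (Geen e n)"
proof -
  define C where "C = {c::nat \<Rightarrow> nat. (\<forall>i. n \<le> i \<longrightarrow> c i = 0) \<and> (\<forall>i<n. c i < e)}"
  have "inj_on (\<lambda>c. restrict c {..<n}) C"
  proof (rule inj_onI)
    fix c c' assume c: "c \<in> C" "c' \<in> C" and eq: "restrict c {..<n} = restrict c' {..<n}"
    show "c = c'"
    proof
      fix i
      show "c i = c' i"
        using c fun_cong[OF eq, of i] by (cases "i < n") (auto simp: C_def)
    qed
  qed
  moreover have "(\<lambda>c. restrict c {..<n}) ` C \<subseteq> PiE {..<n} (\<lambda>_. {..<e})"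
    by (intro image_subsetI) (simp add: C_def restrict_PiE_iff)
  ultimately have "finite C"
    by (rule inj_on_finite) (simp add: finite_PiE)
  moreover have "Geen e n \<subseteq> {\<sigma>. \<sigma> permutes {..<n}} \<times> C"
    unfolding Geen_def C_def by auto
  ultimately show ?thesis
    using finite_permutations[of "{..<n}"] by (meson finite_SigmaI finite_lessThan finite_subset)
qed

lemma geen_mult_left_cancel:
  assumes v: "v \<in> Geen e n" and w: "w \<in> Geen e n" and w': "w' \<in> Geen e n"
    and eq: "geen_mult e n v w = geen_mult e n v w'"
  shows "w = w'"
proof -
  obtain \<tau> d where v_eq: "v = (\<tau>, d)" by (cases v)
  obtain \<sigma> c where w_eq: "w = (\<sigma>, c)" by (cases w)
  obtain \<sigma>' c' where w'_eq: "w' = (\<sigma>', c')" by (cases w')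
  note \<sigma> = Geen_memD[OF w[unfolded w_eq]] and \<sigma>' = Geen_memD[OF w'[unfolded w'_eq]]
    and \<tau> = Geen_memD[OF v[unfolded v_eq]]
  have "\<tau> \<circ> \<sigma> = \<tau> \<circ> \<sigma>'"
    using eq unfolding v_eq w_eq w'_eq geen_mult_def by simp
  then have \<sigma>_eq: "\<sigma> = \<sigma>'"
    using permutes_inj[OF \<tau>(1)] by (simp add: fun_eq_iff inj_eq)
  have "c i = c' i" for i
  proof (cases "i < n")
    case True
    have "snd (geen_mult e n v w) i = snd (geen_mult e n v w') i"
      using eq by simp
    then have "(d (\<sigma> i) + c i) mod e = (d (\<sigma> i) + c' i) mod e"
      using True unfolding v_eq w_eq w'_eq \<sigma>_eq geen_mult_def by (simp add: add.commute)
    then show ?thesis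
      using mod_add_left_cancel_less \<sigma>(3) \<sigma>'(3) True by blast
  qed (simp add: \<sigma>(2) \<sigma>'(2))
  then show ?thesis
    using \<sigma>_eq w_eq w'_eq by auto
qed

lemma geen_mult_right_cancel:
  assumes v: "v \<in> Geen e n" and w: "w \<in> Geen e n" and w': "w' \<in> Geen e n"
    and eq: "geen_mult e n w v = geen_mult e n w' v"
  shows "w = w'"
proof -
  obtain \<tau> d where v_eq: "v = (\<tau>, d)" by (cases v)
  obtain \<sigma> c where w_eq: "w = (\<sigma>, c)" by (cases w)
  obtain \<sigma>' c' where w'_eq: "w' = (\<sigma>', c')" by (cases w')
  note \<sigma> = Geen_memD[OF w[unfolded w_eq]] and \<sigma>' = Geen_memD[OF w'[unfolded w'_eq]]
    and \<tau> = Geen_memD[OF v[unfolded v_eq]]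
  have "\<sigma> \<circ> \<tau> = \<sigma>' \<circ> \<tau>"
    using eq unfolding v_eq w_eq w'_eq geen_mult_def by simp
  then have \<sigma>_eq: "\<sigma> = \<sigma>'"
    using permutes_surj[OF \<tau>(1)] by (metis surj_fun_eq)
  have "c j = c' j" for j
  proof (cases "j < n")
    case True
    then obtain i where i: "i < n" "\<tau> i = j"
      using permutes_image[OF \<tau>(1)] by (metis imageE lessThan_iff)
    have "snd (geen_mult e n w v) i = snd (geen_mult e n w' v) i"
      using eq by simp
    then have "(d i + c j) mod e = (d i + c' j) mod e"
      using i unfolding v_eq w_eq w'_eq geen_mult_def by simp
    then show ?thesis
      using mod_add_left_cancel_less \<sigma>(3) \<sigma>'(3) True by blast
  qed (simp add: \<sigma>(2) \<sigma>'(2))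
  then show ?thesis
    using \<sigma>_eq w_eq w'_eq by auto
qed

lemma geen_mult_left_image:
  assumes "v \<in> Geen e n" "0 < e"
  shows "geen_mult e n v ` Geen e n = Geen e n"
proof (rule endo_inj_surj[OF finite_Geen])
  show "geen_mult e n v ` Geen e n \<subseteq> Geen e n"
    using assms geen_mult_in_Geen by blast
  show "inj_on (geen_mult e n v) (Geen e n)"
    using geen_mult_left_cancel[OF assms(1)] by (rule inj_onI)
qed

lemma geen_mult_right_image:
  assumes "v \<in> Geen e n" "0 < e"
  shows "(\<lambda>w. geen_mult e n w v) ` Geen e n = Geen e n"
proof (rule endo_inj_surj[OF finite_Geen])
  show "(\<lambda>w. geen_mult e n w v) ` Geen e n \<subseteq> Geen e n"
    using assms geen_mult_in_Geen by blast
  show "inj_on (\<lambda>w. geen_mult e n w v) (Geen e n)"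
    using geen_mult_right_cancel[OF assms(1)] by (rule inj_onI)
qed

section \<open>The action on hyperplanes\<close>

lemma finite_hyp: "finite (hyp e n)"
  by (rule finite_subset[of _ "{..<n} \<times> {..<n} \<times> {..<e}"]) (auto simp: hyp_def)

lemma edge_map_in_hyp:
  assumes w: "w \<in> Geen e n" and x: "x \<in> hyp e n"
  shows "edge_map e w x \<in> hyp e n"
proof -
  obtain \<sigma> c where w_eq: "w = (\<sigma>, c)" by (cases w)
  obtain i j k where x_eq: "x = (i, j, k)" by (cases x)
  note \<sigma> = Geen_memD[OF w[unfolded w_eq]]
  have ijk: "i < j" "j < n" "k < e"
    using x x_eq hyp_def by auto
  then have "\<sigma> i < n" "\<sigma> j < n" "\<sigma> i \<noteq> \<sigma> j"
    using permutes_in_image[OF \<sigma>(1)] permutes_inj[OF \<sigma>(1)] by (auto simp: inj_eq)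
  then show ?thesis
    using ijk unfolding w_eq x_eq hyp_def by (auto simp: Let_def)
qed

lemma image_edge_map_subset_hyp:
  "w \<in> Geen e n \<Longrightarrow> D \<subseteq> hyp e n \<Longrightarrow> edge_map e w ` D \<subseteq> hyp e n"
  using edge_map_in_hyp by blast

lemma inj_on_edge_map:
  assumes w: "w \<in> Geen e n"
  shows "inj_on (edge_map e w) (hyp e n)"
proof (rule inj_onI)
  fix x y
  assume x: "x \<in> hyp e n" and y: "y \<in> hyp e n" and eq: "edge_map e w x = edge_map e w y"
  obtain \<sigma> c where w_eq: "w = (\<sigma>, c)" by (cases w)
  obtain i j k where x_eq: "x = (i, j, k)" by (cases x)
  obtain i' j' k' where y_eq: "y = (i', j', k')" by (cases y)
  note \<sigma> = Geen_memD[OF w[unfolded w_eq]]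
  have ijk: "i < j" "j < n" "k < e" "i' < j'" "j' < n" "k' < e"
    using x x_eq y y_eq hyp_def by auto
  have inj: "inj \<sigma>"
    using permutes_inj[OF \<sigma>(1)] .
  have ne: "\<sigma> i \<noteq> \<sigma> j" "\<sigma> i' \<noteq> \<sigma> j'"
    using ijk inj by (auto simp: inj_eq)
  have vertices: "i = i' \<and> j = j'"
    using eq ne ijk inj unfolding w_eq x_eq y_eq by (auto simp: Let_def inj_eq split: if_splits)
  let ?m = "\<lambda>k. (k + c i + (e - c j)) mod e"
  have "?m k = ?m k' \<or> (e - ?m k) mod e = (e - ?m k') mod e"
    using eq vertices unfolding w_eq x_eq y_eq by (auto simp: Let_def split: if_splits)
  then have "?m k = ?m k'"
    using ijk exponent_negate_negate by (metis mod_less_divisor zero_less_iff_neq_zero not_less0)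
  then have "k = k'"
    using mod_add_left_cancel_less[of k e k' "c i + (e - c j)"] ijk by (simp add: ac_simps)
  then show "x = y"
    using vertices x_eq y_eq by simp
qed

lemma edge_map_geen_one: "x \<in> hyp e n \<Longrightarrow> edge_map e geen_one x = x"
  unfolding geen_one_def hyp_def by auto

lemma image_edge_map_geen_one: "D \<subseteq> hyp e n \<Longrightarrow> edge_map e geen_one ` D = D"
  using edge_map_geen_one by (metis image_cong image_ident subsetD)

lemma edge_map_geen_mult:
  assumes v: "v \<in> Geen e n" and w: "w \<in> Geen e n" and x: "x \<in> hyp e n"
  shows "edge_map e (geen_mult e n v w) x = edge_map e v (edge_map e w x)"
proof -
  obtain \<tau> d where v_eq: "v = (\<tau>, d)" by (cases v)
  obtain \<sigma> c where w_eq: "w = (\<sigma>, c)" by (cases w)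
  obtain i j k where x_eq: "x = (i, j, k)" by (cases x)
  note \<sigma> = Geen_memD[OF w[unfolded w_eq]] and \<tau> = Geen_memD[OF v[unfolded v_eq]]
  have ijk: "i < j" "j < n" "k < e"
    using x x_eq hyp_def by auto
  have \<sigma>ij: "\<sigma> i < n" "\<sigma> j < n" "\<sigma> i \<noteq> \<sigma> j"
    using ijk permutes_in_image[OF \<sigma>(1)] permutes_inj[OF \<sigma>(1)] by (auto simp: inj_eq)
  have \<tau>\<sigma>ij: "\<tau> (\<sigma> i) \<noteq> \<tau> (\<sigma> j)"
    using \<sigma>ij permutes_inj[OF \<tau>(1)] by (auto simp: inj_eq)
  have bounds: "c i < e" "c j < e" "d (\<sigma> i) < e" "d (\<sigma> j) < e"
    using ijk \<sigma>ij \<sigma>(3) \<tau>(3) by auto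
  define m\<^sub>0 where "m\<^sub>0 = (k + c i + (e - c j)) mod e"
  define m where "m = (k + (c i + d (\<sigma> i)) mod e + (e - (c j + d (\<sigma> j)) mod e)) mod e"
  have "m\<^sub>0 < e" "m < e"
    using ijk by (simp_all add: m\<^sub>0_def m_def)
  have compose: "(m\<^sub>0 + d (\<sigma> i) + (e - d (\<sigma> j))) mod e = m"
    unfolding m\<^sub>0_def m_def using bounds by (intro exponent_shift_compose) simp_all
  have product: "edge_map e (geen_mult e n v w) x =
      (if \<tau> (\<sigma> i) < \<tau> (\<sigma> j) then (\<tau> (\<sigma> i), \<tau> (\<sigma> j), m)
       else (\<tau> (\<sigma> j), \<tau> (\<sigma> i), (e - m) mod e))"
    using ijk unfolding v_eq w_eq x_eq by (simp add: geen_mult_def m_def Let_def)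
  show ?thesis
  proof (cases "\<sigma> i < \<sigma> j")
    case True
    then show ?thesis
      using product compose unfolding v_eq w_eq x_eq by (simp add: Let_def m\<^sub>0_def)
  next
    case False
    \<comment> \<open>w reverses the edge, negating its exponent.\<close>
    have "((e - m\<^sub>0) mod e + d (\<sigma> j) + (e - d (\<sigma> i))) mod e = (e - m) mod e"
      using exponent_shift_negate[of m\<^sub>0 e "d (\<sigma> i)" "d (\<sigma> j)"] \<open>m\<^sub>0 < e\<close> bounds compose
      by simp
    then show ?thesis
      using False product \<sigma>ij(3) \<tau>\<sigma>ij exponent_negate_negate[OF \<open>m < e\<close>]
      unfolding v_eq w_eq x_eq by (auto simp: Let_def m\<^sub>0_def)
  qed
qed

lemma image_edge_map_geen_mult:
  assumes "v \<in> Geen e n" "w \<in> Geen e n" "D \<subseteq> hyp e n"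
  shows "edge_map e (geen_mult e n v w) ` D = edge_map e v ` edge_map e w ` D"
  unfolding image_image using assms edge_map_geen_mult by (intro image_cong) blast+

section \<open>Signs\<close>

definition inversion_sign :: "('a::linorder \<Rightarrow> 'b::linorder) \<Rightarrow> 'a set \<Rightarrow> rat" where
  "inversion_sign f D = (-1) ^ card {(a, b). a \<in> D \<and> b \<in> D \<and> a < b \<and> f b < f a}"

definition increasing_pairs :: "'a::linorder set \<Rightarrow> ('a \<times> 'a) set" where
  "increasing_pairs D = {(a, b). a \<in> D \<and> b \<in> D \<and> a < b}"

lemma finite_increasing_pairs: "finite D \<Longrightarrow> finite (increasing_pairs D)"
  unfolding increasing_pairs_def by (rule finite_subset[of _ "D \<times> D"]) auto

lemma inversion_sign_cong:
  "(\<And>x. x \<in> D \<Longrightarrow> f x = g x) \<Longrightarrow> inversion_sign f D = inversion_sign g D"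
  unfolding inversion_sign_def by (rule arg_cong[where f = "\<lambda>S. (-1) ^ card S"]) auto

lemma inversion_sign_eq_prod:
  assumes "finite D"
  shows "inversion_sign f D = (\<Prod>(a, b)\<in>increasing_pairs D. if f b < f a then -1 else 1)"
proof -
  let ?P = "increasing_pairs D" and ?inv = "{(a, b). f b < f a}"
  have "(\<Prod>(a, b)\<in>?P. if f b < f a then -1 else 1) = (\<Prod>p\<in>?P. if p \<in> ?inv then -1 else (1::rat))"
    by (rule prod.cong) auto
  also have "\<dots> = (-1) ^ card (?P \<inter> ?inv)"
    using prod.If_cases[OF finite_increasing_pairs[OF assms], where h = "\<lambda>_. -1" and g = "\<lambda>_. 1"]
    by simp
  also have "?P \<inter> ?inv = {(a, b). a \<in> D \<and> b \<in> D \<and> a < b \<and> f b < f a}"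
    by (auto simp: increasing_pairs_def)
  finally show ?thesis
    unfolding inversion_sign_def ..
qed

definition sorted_image :: "('a \<Rightarrow> 'b::linorder) \<Rightarrow> 'a \<times> 'a \<Rightarrow> 'b \<times> 'b" where
  "sorted_image f p = (min (f (fst p)) (f (snd p)), max (f (fst p)) (f (snd p)))"

lemma sorted_image_Pair [simp]: "sorted_image f (a, b) = (min (f a) (f b), max (f a) (f b))"
  unfolding sorted_image_def by simp

lemma inj_on_sorted_image:
  assumes "inj_on f D"
  shows "inj_on (sorted_image f) (increasing_pairs D)"
proof (rule inj_onI)
  fix p q
  assume "p \<in> increasing_pairs D" "q \<in> increasing_pairs D" and eq: "sorted_image f p = sorted_image f q"
  then obtain a b a' b' where ab: "p = (a, b)" "a \<in> D" "b \<in> D" "a < b"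
    and ab': "q = (a', b')" "a' \<in> D" "b' \<in> D" "a' < b'"
    by (auto simp: increasing_pairs_def)
  have "f ` {a, b} = f ` {a', b'}"
    using eq unfolding ab ab' by (auto simp: min_def max_def split: if_splits)
  then have "{a, b} = {a', b'}"
    using ab ab' inj_on_image_eq_iff[OF assms, of "{a, b}" "{a', b'}"] by simp
  then show "p = q"
    using ab ab' by (auto simp: doubleton_eq_iff)
qed

lemma sorted_image_increasing_pairs:
  assumes "inj_on f D"
  shows "sorted_image f ` increasing_pairs D = increasing_pairs (f ` D)"
proof
  show "sorted_image f ` increasing_pairs D \<subseteq> increasing_pairs (f ` D)"
  proof (rule image_subsetI)
    fix p assume "p \<in> increasing_pairs D"
    then obtain a b where ab: "p = (a, b)" "a \<in> D" "b \<in> D" "a < b"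
      by (auto simp: increasing_pairs_def)
    then have "f a \<noteq> f b"
      using assms by (auto simp: inj_on_eq_iff)
    then show "sorted_image f p \<in> increasing_pairs (f ` D)"
      using ab by (auto simp: increasing_pairs_def min_def max_def)
  qed
  show "increasing_pairs (f ` D) \<subseteq> sorted_image f ` increasing_pairs D"
  proof
    fix q assume "q \<in> increasing_pairs (f ` D)"
    then obtain a b where q: "q = (f a, f b)" "a \<in> D" "b \<in> D" "f a < f b"
      by (auto simp: increasing_pairs_def)
    then consider "a < b" | "b < a"
      by (metis less_irrefl neqE)
    then show "q \<in> sorted_image f ` increasing_pairs D"
    proof cases
      case 1
      then show ?thesis
        using q by (intro image_eqI[where x = "(a, b)"]) (auto simp: increasing_pairs_def)
    next
      case 2
      then show ?thesis
        using q by (intro image_eqI[where x = "(b, a)"]) (auto simp: increasing_pairs_def)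
    qed
  qed
qed

text \<open>Each pair a < b contributes the product of its inversion sign under f and the
  inversion sign under g of the sorted pair of images.\<close>
lemma inversion_sign_comp:
  assumes "finite D" and f: "inj_on f D" and g: "inj_on g (f ` D)"
  shows "inversion_sign (g \<circ> f) D = inversion_sign f D * inversion_sign g (f ` D)"
proof -
  let ?P = "increasing_pairs D"
  define sign_g where "sign_g = (\<lambda>(x, y). if g y < g x then -1 else (1::rat))"
  have split: "(if g (f b) < g (f a) then -1 else 1)
      = (if f b < f a then -1 else 1) * sign_g (sorted_image f (a, b))" if "(a, b) \<in> ?P" for a b
  proof -
    have "f a \<noteq> f b" "g (f a) \<noteq> g (f b)"
      using that f g by (auto simp: increasing_pairs_def inj_on_eq_iff)
    then show ?thesis
      by (auto simp: sign_g_def min_def max_def)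
  qed
  have "inversion_sign (g \<circ> f) D
      = (\<Prod>(a, b)\<in>?P. (if f b < f a then -1 else 1) * sign_g (sorted_image f (a, b)))"
    unfolding inversion_sign_eq_prod[OF assms(1)] by (rule prod.cong) (auto simp: split)
  also have "\<dots> = inversion_sign f D * (\<Prod>p\<in>?P. sign_g (sorted_image f p))"
    unfolding inversion_sign_eq_prod[OF assms(1)] prod.distrib[symmetric]
    by (rule prod.cong) auto
  also have "(\<Prod>p\<in>?P. sign_g (sorted_image f p)) = (\<Prod>q\<in>increasing_pairs (f ` D). sign_g q)"
    using bij_betw_imageI[OF inj_on_sorted_image[OF f] sorted_image_increasing_pairs[OF f]]
    by (rule prod.reindex_bij_betw)
  also have "\<dots> = inversion_sign g (f ` D)"
    unfolding inversion_sign_eq_prod[OF finite_imageI[OF assms(1)]] sign_g_def ..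
  finally show ?thesis .
qed

lemma act_sign_eq_inversion_sign: "act_sign e w D = inversion_sign (edge_map e w) D"
  unfolding act_sign_def inversion_sign_def ..

lemma act_sign_geen_mult:
  assumes v: "v \<in> Geen e n" and w: "w \<in> Geen e n" and D: "D \<subseteq> hyp e n"
  shows "act_sign e (geen_mult e n v w) D = act_sign e w D * act_sign e v (edge_map e w ` D)"
proof -
  have "act_sign e (geen_mult e n v w) D = inversion_sign (edge_map e v \<circ> edge_map e w) D"
    unfolding act_sign_eq_inversion_sign
    by (intro inversion_sign_cong) (simp add: edge_map_geen_mult[OF v w] subsetD[OF D])
  also have "\<dots> = act_sign e w D * act_sign e v (edge_map e w ` D)"
    unfolding act_sign_eq_inversion_sign
  proof (rule inversion_sign_comp)
    show "finite D"
      using D finite_hyp finite_subset by blast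
    show "inj_on (edge_map e w) D"
      using inj_on_edge_map[OF w] D inj_on_subset by blast
    show "inj_on (edge_map e v) (edge_map e w ` D)"
      using inj_on_edge_map[OF v] image_edge_map_subset_hyp[OF w D] inj_on_subset by blast
  qed
  finally show ?thesis .
qed

lemma act_sign_cases: "act_sign e w D = 1 \<or> act_sign e w D = -1"
  unfolding act_sign_def by (simp add: minus_one_power_iff)

section \<open>Bases from families with disjoint supports\<close>

lemma sum_disjoint_supports:
  fixes I :: "'a set set" and b :: "'a set \<Rightarrow> 'a \<Rightarrow> 'b::semiring_0" and a :: "'a set \<Rightarrow> 'b"
  assumes fin: "finite I"
    and supp: "\<And>i T. i \<in> I \<Longrightarrow> b i T \<noteq> 0 \<Longrightarrow> T \<in> i"
    and disj: "\<And>i j T. i \<in> I \<Longrightarrow> j \<in> I \<Longrightarrow> T \<in> i \<Longrightarrow> T \<in> j \<Longrightarrow> i = j"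
  shows sum_disjoint_supports_in: "i \<in> I \<Longrightarrow> T \<in> i \<Longrightarrow> (\<Sum>j\<in>I. a j * b j T) = a i * b i T"
    and sum_disjoint_supports_outside: "T \<notin> \<Union>I \<Longrightarrow> (\<Sum>j\<in>I. a j * b j T) = 0"
proof -
  assume i: "i \<in> I" "T \<in> i"
  have "b j T = 0" if j: "j \<in> I - {i}" for j
  proof (rule ccontr)
    assume "b j T \<noteq> 0"
    then have "T \<in> j"
      using supp j by blast
    then show False
      using disj[of i j T] i j by blast
  qed
  then have "(\<Sum>j\<in>I - {i}. a j * b j T) = 0"
    by simp
  then show "(\<Sum>j\<in>I. a j * b j T) = a i * b i T"
    using sum.remove[OF fin i(1), of "\<lambda>j. a j * b j T"] by simp
next
  assume T: "T \<notin> \<Union>I"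
  have "b j T = 0" if "j \<in> I" for j
    using that T supp by blast
  then show "(\<Sum>j\<in>I. a j * b j T) = 0"
    by simp
qed

lemma disjoint_supports_expansion:
  fixes I :: "'a set set" and b :: "'a set \<Rightarrow> 'a \<Rightarrow> 'b::semiring_0"
  assumes fin: "finite I"
    and supp: "\<And>i T. i \<in> I \<Longrightarrow> b i T \<noteq> 0 \<Longrightarrow> T \<in> i"
    and disj: "\<And>i j T. i \<in> I \<Longrightarrow> j \<in> I \<Longrightarrow> T \<in> i \<Longrightarrow> T \<in> j \<Longrightarrow> i = j"
    and on_supports: "\<And>i T. i \<in> I \<Longrightarrow> T \<in> i \<Longrightarrow> x T = c i * b i T"
    and outside: "\<And>T. T \<notin> \<Union>I \<Longrightarrow> x T = 0"
  shows "x = (\<lambda>T. \<Sum>i\<in>I. c i * b i T)"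
proof
  fix T
  show "x T = (\<Sum>i\<in>I. c i * b i T)"
  proof (cases "T \<in> \<Union>I")
    case True
    then obtain i where i: "i \<in> I" "T \<in> i"
      by blast
    have "(\<Sum>j\<in>I. c j * b j T) = c i * b i T"
      using fin supp disj i by (rule sum_disjoint_supports_in)
    then show ?thesis
      using on_supports[OF i] by simp
  next
    case False
    have "(\<Sum>j\<in>I. c j * b j T) = 0"
      using fin supp disj False by (rule sum_disjoint_supports_outside)
    then show ?thesis
      using outside[OF False] by simp
  qed
qed

lemma is_basis_family_disjoint_supports:
  fixes V :: "(edge set \<Rightarrow> rat) set" and I :: "edge set set set"
  assumes fin: "finite I"
    and mem: "\<And>i. i \<in> I \<Longrightarrow> b i \<in> V"
    and supp: "\<And>i T. i \<in> I \<Longrightarrow> b i T \<noteq> 0 \<Longrightarrow> T \<in> i"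
    and disj: "\<And>i j T. i \<in> I \<Longrightarrow> j \<in> I \<Longrightarrow> T \<in> i \<Longrightarrow> T \<in> j \<Longrightarrow> i = j"
    and r: "\<And>i. i \<in> I \<Longrightarrow> r i \<in> i" and r_nonzero: "\<And>i. i \<in> I \<Longrightarrow> b i (r i) \<noteq> 0"
    and proportional: "\<And>x i T. x \<in> V \<Longrightarrow> i \<in> I \<Longrightarrow> T \<in> i \<Longrightarrow> x T = x (r i) / b i (r i) * b i T"
    and vanish: "\<And>x T. x \<in> V \<Longrightarrow> T \<notin> \<Union>I \<Longrightarrow> x T = 0"
  shows "is_basis_family V I b"
  unfolding is_basis_family_def
proof (intro conjI ballI fin mem)
  fix x assume x: "x \<in> V"
  define a where "a i = (if i \<in> I then x (r i) / b i (r i) else 0)" for i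
  have expansion: "x = (\<lambda>T. \<Sum>i\<in>I. a i * b i T)"
  proof (rule disjoint_supports_expansion[OF fin])
    show "x T = a i * b i T" if "i \<in> I" "T \<in> i" for i T
      using proportional[OF x that] that(1) by (simp add: a_def)
  qed (use supp disj vanish[OF x] in blast)+
  have unique: "a' = a" if a': "(\<forall>i. i \<notin> I \<longrightarrow> a' i = 0) \<and> x = (\<lambda>T. \<Sum>i\<in>I. a' i * b i T)"
    for a'
  proof
    fix i
    show "a' i = a i"
    proof (cases "i \<in> I")
      case True
      have "(\<Sum>j\<in>I. a' j * b j (r i)) = a' i * b i (r i)"
        using fin supp disj True r[OF True] by (rule sum_disjoint_supports_in)
      then have "x (r i) = a' i * b i (r i)"
        using a' by simp
      then show ?thesis
        using r_nonzero[OF True] True by (simp add: a_def)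
    qed (use a' a_def in auto)
  qed
  show "\<exists>!a. (\<forall>i. i \<notin> I \<longrightarrow> a i = 0) \<and> x = (\<lambda>T. \<Sum>i\<in>I. a i * b i T)"
    using expansion unique by (intro ex1I[of _ a]) (auto simp: a_def)
qed

section \<open>Invariant elements of the exterior algebra\<close>

lemma ext_act_image:
  assumes w: "w \<in> Geen e n" and S: "S \<subseteq> hyp e n"
  shows "ext_act e n w x (edge_map e w ` S) = act_sign e w S * x S"
proof -
  have "ext_act e n w x (edge_map e w ` S)
      = (\<Sum>S'\<in>Pow (hyp e n). if S' = S then act_sign e w S' * x S' else 0)"
    unfolding ext_act_def
  proof (rule sum.cong[OF refl])
    fix S' assume "S' \<in> Pow (hyp e n)"
    then have "edge_map e w ` S' = edge_map e w ` S \<longleftrightarrow> S' = S"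
      using S inj_on_image_eq_iff[OF inj_on_edge_map[OF w]] by blast
    then show "(if edge_map e w ` S' = edge_map e w ` S then act_sign e w S' * x S' else 0)
        = (if S' = S then act_sign e w S' * x S' else 0)"
      by simp
  qed
  also have "\<dots> = act_sign e w S * x S"
    using S finite_hyp by simp
  finally show ?thesis .
qed

lemma ext_inv_image:
  assumes "x \<in> ext_inv e n" "w \<in> Geen e n" "S \<subseteq> hyp e n"
  shows "x (edge_map e w ` S) = act_sign e w S * x S"
  using assms ext_act_image[of w e n S x] unfolding ext_inv_def by auto

lemma ext_inv_proportional_on_mg_orbit:
  assumes x: "x \<in> ext_inv e n" and y: "y \<in> ext_inv e n" and D: "D \<subseteq> hyp e n"
    and T: "T \<in> mg_orbit e n D" and y_D: "y D \<noteq> 0"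
  shows "x T = x D / y D * y T"
proof -
  obtain w where w: "w \<in> Geen e n" "T = edge_map e w ` D"
    using T unfolding mg_orbit_def by auto
  then show ?thesis
    using ext_inv_image[OF x w(1) D] ext_inv_image[OF y w(1) D] y_D by simp
qed

lemma invariant_mg_if_ext_inv_nonzero:
  assumes x: "x \<in> ext_inv e n" and T: "x T \<noteq> 0"
  shows "invariant_mg e n T"
proof -
  have T_hyp: "T \<subseteq> hyp e n"
    using x T unfolding ext_inv_def ext_alg_def by auto
  have "act_sign e w T = 1" if w: "w \<in> Geen e n" and stab: "edge_map e w ` T = T" for w
  proof (rule ccontr)
    assume "act_sign e w T \<noteq> 1"
    then have "act_sign e w T = -1"
      using act_sign_cases by blast
    then have "x T = - x T"
      using ext_inv_image[OF x w T_hyp] stab by simp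
    then show False
      using T by simp
  qed
  then show ?thesis
    unfolding invariant_mg_def using T_hyp by auto
qed

section \<open>Orbit classes\<close>

lemma orbit_class_eq:
  assumes D: "D \<subseteq> hyp e n"
  shows "orbit_class e n D T = (\<Sum>w\<in>Geen e n. if edge_map e w ` D = T then act_sign e w D else 0)"
  unfolding orbit_class_def
proof (rule sum.cong[OF refl])
  fix w
  have "ext_act e n w (omega D) T = (\<Sum>S\<in>Pow (hyp e n).
      if S = D then (if edge_map e w ` D = T then act_sign e w D else 0) else 0)"
    unfolding ext_act_def omega_def by (rule sum.cong) auto
  also have "\<dots> = (if edge_map e w ` D = T then act_sign e w D else 0)"
    using D finite_hyp by simp
  finally show "ext_act e n w (omega D) T = (if edge_map e w ` D = T then act_sign e w D else 0)" .
qed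

lemma orbit_class_in_ext_alg:
  assumes D: "D \<subseteq> hyp e n"
  shows "orbit_class e n D \<in> ext_alg e n"
  unfolding ext_alg_def
proof (intro CollectI allI impI)
  fix S assume "S \<notin> Pow (hyp e n)"
  then have "edge_map e w ` D \<noteq> S" if "w \<in> Geen e n" for w
    using image_edge_map_subset_hyp[OF that D] by auto
  then show "orbit_class e n D S = 0"
    unfolding orbit_class_eq[OF D] by simp
qed

text \<open>Acting by v reindexes the orbit sum along w \<mapsto> v w, by the cocycle identity for signs.\<close>
lemma ext_act_orbit_class:
  assumes v: "v \<in> Geen e n" and D: "D \<subseteq> hyp e n" and e: "0 < e"
  shows "ext_act e n v (orbit_class e n D) = orbit_class e n D"
proof
  fix T
  have "ext_act e n v (orbit_class e n D) T =
      (\<Sum>S\<in>Pow (hyp e n). \<Sum>w\<in>Geen e n. if edge_map e w ` D = S \<and> edge_map e v ` S = T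
        then act_sign e v S * act_sign e w D else 0)"
    unfolding ext_act_def orbit_class_eq[OF D]
    by (rule sum.cong[OF refl]) (auto simp: sum_distrib_left intro!: sum.cong)
  also have "\<dots> = (\<Sum>w\<in>Geen e n. \<Sum>S\<in>Pow (hyp e n). if S = edge_map e w ` D then
      (if edge_map e v ` edge_map e w ` D = T
       then act_sign e v (edge_map e w ` D) * act_sign e w D else 0) else 0)"
    by (subst sum.swap) (auto intro!: sum.cong)
  also have "\<dots> = (\<Sum>w\<in>Geen e n. if edge_map e v ` edge_map e w ` D = T
      then act_sign e v (edge_map e w ` D) * act_sign e w D else 0)"
    using finite_hyp image_edge_map_subset_hyp[OF _ D] by (auto intro!: sum.cong)
  also have "\<dots> = (\<Sum>w\<in>Geen e n. if edge_map e (geen_mult e n v w) ` D = T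
      then act_sign e (geen_mult e n v w) D else 0)"
    using image_edge_map_geen_mult[OF v _ D] act_sign_geen_mult[OF v _ D]
    by (auto intro!: sum.cong simp: mult.commute)
  also have "\<dots> = (\<Sum>w\<in>geen_mult e n v ` Geen e n.
      if edge_map e w ` D = T then act_sign e w D else 0)"
    using geen_mult_left_cancel[OF v]
    by (subst sum.reindex) (auto intro: inj_onI)
  also have "\<dots> = orbit_class e n D T"
    unfolding geen_mult_left_image[OF v e] orbit_class_eq[OF D] ..
  finally show "ext_act e n v (orbit_class e n D) T = orbit_class e n D T" .
qed

lemma orbit_class_in_ext_inv:
  "D \<subseteq> hyp e n \<Longrightarrow> 0 < e \<Longrightarrow> orbit_class e n D \<in> ext_inv e n"
  unfolding ext_inv_def using orbit_class_in_ext_alg ext_act_orbit_class by blast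

lemma orbit_class_support:
  assumes "D \<subseteq> hyp e n" and "orbit_class e n D T \<noteq> 0"
  shows "T \<in> mg_orbit e n D"
proof (rule ccontr)
  assume "T \<notin> mg_orbit e n D"
  then have "edge_map e w ` D \<noteq> T" if "w \<in> Geen e n" for w
    using that unfolding mg_orbit_def by auto
  then have "orbit_class e n D T = 0"
    unfolding orbit_class_eq[OF assms(1)] by simp
  then show False
    using assms(2) by simp
qed

lemma homogeneous_orbit_class:
  assumes D: "D \<subseteq> hyp e n"
  shows "homogeneous (card D) (orbit_class e n D)"
  unfolding homogeneous_def
proof (intro allI impI)
  fix T assume "orbit_class e n D T \<noteq> 0"
  then obtain w where w: "w \<in> Geen e n" "T = edge_map e w ` D"
    using orbit_class_support[OF D] unfolding mg_orbit_def by blast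
  have "inj_on (edge_map e w) D"
    using inj_on_edge_map[OF w(1)] D inj_on_subset by blast
  then show "card T = card D"
    using w(2) card_image by blast
qed

definition stabiliser :: "nat \<Rightarrow> nat \<Rightarrow> edge set \<Rightarrow> geen_elem set" where
  "stabiliser e n D = {w \<in> Geen e n. edge_map e w ` D = D}"

lemma orbit_class_self:
  assumes D: "invariant_mg e n D"
  shows "orbit_class e n D D = of_nat (card (stabiliser e n D))"
proof -
  have D_hyp: "D \<subseteq> hyp e n"
    using D invariant_mg_def by auto
  have "orbit_class e n D D = (\<Sum>w\<in>Geen e n. of_bool (edge_map e w ` D = D))"
    unfolding orbit_class_eq[OF D_hyp] using D unfolding invariant_mg_def
    by (intro sum.cong) auto
  then show ?thesis
    unfolding stabiliser_def using finite_Geen by (simp add: Collect_conj_eq Int_commute)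
qed

lemma orbit_class_self_nonzero:
  assumes "invariant_mg e n D" and "0 < e"
  shows "orbit_class e n D D \<noteq> 0"
proof -
  have "geen_one \<in> stabiliser e n D"
    using assms geen_one_in_Geen image_edge_map_geen_one
    unfolding stabiliser_def invariant_mg_def by blast
  moreover have "finite (stabiliser e n D)"
    unfolding stabiliser_def using finite_Geen by simp
  ultimately have "card (stabiliser e n D) \<noteq> 0"
    by (auto simp: card_gt_0_iff)
  then show ?thesis
    unfolding orbit_class_self[OF assms(1)] by simp
qed

section \<open>Orbits of invariant multigraphs\<close>

lemma mem_mg_orbit_self: "D \<subseteq> hyp e n \<Longrightarrow> 0 < e \<Longrightarrow> D \<in> mg_orbit e n D"
  unfolding mg_orbit_def
  by (rule image_eqI[where x = geen_one]) (simp_all add: image_edge_map_geen_one geen_one_in_Geen)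

lemma mg_orbit_image:
  assumes w: "w \<in> Geen e n" and D: "D \<subseteq> hyp e n" and e: "0 < e"
  shows "mg_orbit e n (edge_map e w ` D) = mg_orbit e n D"
proof -
  have "mg_orbit e n (edge_map e w ` D) = (\<lambda>u. edge_map e (geen_mult e n u w) ` D) ` Geen e n"
    unfolding mg_orbit_def using image_edge_map_geen_mult[OF _ w D] by auto
  also have "\<dots> = (\<lambda>u. edge_map e u ` D) ` (\<lambda>u. geen_mult e n u w) ` Geen e n"
    by (simp add: image_image)
  also have "\<dots> = mg_orbit e n D"
    unfolding geen_mult_right_image[OF w e] mg_orbit_def ..
  finally show ?thesis .
qed

text \<open>Invariance is a property of the orbit: the orbit class of an invariant D is an invariant
  element that does not vanish anywhere on the orbit of D.\<close>
lemma inv_orbits_memD: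
  assumes O: "Orb \<in> inv_orbits e n" and R: "R \<in> Orb" and e: "0 < e"
  shows "invariant_mg e n R" "mg_orbit e n R = Orb"
proof -
  obtain D where D: "Orb = mg_orbit e n D" "invariant_mg e n D"
    using O unfolding inv_orbits_def by auto
  have D_hyp: "D \<subseteq> hyp e n"
    using D(2) invariant_mg_def by auto
  obtain v where v: "v \<in> Geen e n" "R = edge_map e v ` D"
    using R D(1) unfolding mg_orbit_def by auto
  show "mg_orbit e n R = Orb"
    using mg_orbit_image[OF v(1) D_hyp e] v(2) D(1) by simp
  have inv: "orbit_class e n D \<in> ext_inv e n"
    using orbit_class_in_ext_inv[OF D_hyp e] .
  have "orbit_class e n D R = act_sign e v D * orbit_class e n D D"
    using ext_inv_image[OF inv v(1) D_hyp] v(2) by simp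
  moreover have "act_sign e v D \<noteq> 0"
    using act_sign_cases[of e v D] by auto
  ultimately have "orbit_class e n D R \<noteq> 0"
    using orbit_class_self_nonzero[OF D(2) e] by simp
  then show "invariant_mg e n R"
    by (rule invariant_mg_if_ext_inv_nonzero[OF inv])
qed

lemma finite_inv_orbits: "finite (inv_orbits e n)"
proof (rule finite_subset)
  show "inv_orbits e n \<subseteq> Pow (Pow (hyp e n))"
    unfolding inv_orbits_def invariant_mg_def mg_orbit_def
    using image_edge_map_subset_hyp by blast
  show "finite (Pow (Pow (hyp e n)))"
    using finite_hyp by simp
qed

lemma ext_inv_support_subset_inv_orbits:
  assumes "x \<in> ext_inv e n" and "x T \<noteq> 0" and "0 < e"
  shows "T \<in> \<Union>(inv_orbits e n)"
proof -
  have "invariant_mg e n T"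
    using assms(1,2) by (rule invariant_mg_if_ext_inv_nonzero)
  moreover from this have "T \<in> mg_orbit e n T"
    using mem_mg_orbit_self assms(3) unfolding invariant_mg_def by blast
  ultimately show ?thesis
    unfolding inv_orbits_def by blast
qed

lemma is_basis_family_orbit_classes:
  assumes e: "0 < e" and rep: "\<forall>Orb\<in>inv_orbits e n. rep Orb \<in> Orb"
  shows "is_basis_family (ext_inv e n) (inv_orbits e n) (\<lambda>Orb. orbit_class e n (rep Orb))"
proof -
  have rep_orbit: "rep Orb \<subseteq> hyp e n" "invariant_mg e n (rep Orb)" "mg_orbit e n (rep Orb) = Orb"
    if "Orb \<in> inv_orbits e n" for Orb
    using rep inv_orbits_memD[OF that _ e] that unfolding invariant_mg_def by auto
  show ?thesis
  proof (rule is_basis_family_disjoint_supports[where r = rep])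
    show "T \<in> Orb" if "Orb \<in> inv_orbits e n" "orbit_class e n (rep Orb) T \<noteq> 0" for Orb T
      using orbit_class_support[OF rep_orbit(1)[OF that(1)] that(2)] rep_orbit(3)[OF that(1)] by simp
    show "Orb = Orb'" if "Orb \<in> inv_orbits e n" "Orb' \<in> inv_orbits e n" "T \<in> Orb" "T \<in> Orb'"
      for Orb Orb' T
      using inv_orbits_memD(2)[OF that(1,3) e] inv_orbits_memD(2)[OF that(2,4) e] by simp
    show "x T = x (rep Orb) / orbit_class e n (rep Orb) (rep Orb) * orbit_class e n (rep Orb) T"
      if "x \<in> ext_inv e n" "Orb \<in> inv_orbits e n" "T \<in> Orb" for x Orb T
      using ext_inv_proportional_on_mg_orbit[OF that(1)
          orbit_class_in_ext_inv[OF rep_orbit(1)[OF that(2)] e] rep_orbit(1)[OF that(2)] _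
          orbit_class_self_nonzero[OF rep_orbit(2)[OF that(2)] e]]
        rep_orbit(3)[OF that(2)] that(3)
      by simp
    show "x T = 0" if "x \<in> ext_inv e n" "T \<notin> \<Union>(inv_orbits e n)" for x T
      using ext_inv_support_subset_inv_orbits[OF that(1) _ e] that(2) by blast
  qed (use finite_inv_orbits orbit_class_in_ext_inv orbit_class_self_nonzero rep rep_orbit e in auto)
qed

theorem theorem3p13:
  fixes e n :: nat and rep :: "edge set set \<Rightarrow> edge set"
  assumes "1 \<le> e" and "1 \<le> n"
    and "\<forall>Orb\<in>inv_orbits e n. rep Orb \<in> Orb"
  shows "(\<forall>Orb\<in>inv_orbits e n. orbit_class e n (rep Orb) \<noteq> (\<lambda>T. 0))
       \<and> (\<forall>Orb\<in>inv_orbits e n. homogeneous (card (rep Orb)) (orbit_class e n (rep Orb)))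
       \<and> is_basis_family (ext_inv e n) (inv_orbits e n) (\<lambda>Orb. orbit_class e n (rep Orb))"
proof -
  have e: "0 < e"
    using assms(1) by simp
  have rep: "invariant_mg e n (rep Orb)" if "Orb \<in> inv_orbits e n" for Orb
    using inv_orbits_memD(1)[OF that _ e] assms(3) that by blast
  have "orbit_class e n (rep Orb) \<noteq> (\<lambda>T. 0)" if "Orb \<in> inv_orbits e n" for Orb
    using orbit_class_self_nonzero[OF rep[OF that] e] by force
  moreover have "homogeneous (card (rep Orb)) (orbit_class e n (rep Orb))"
    if "Orb \<in> inv_orbits e n" for Orb
    using homogeneous_orbit_class rep[OF that] unfolding invariant_mg_def by blast
  ultimately show ?thesis
    using is_basis_family_orbit_classes[OF e assms(3)] by blast
qed

end
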